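(* Let $A$ be a finite set and $p : A \to [0,1]$. Let $\{X_i(u)\}_{i \ge 1, u \in A}$ be independent random variables with $X_i(u) \sim \mathrm{Bernoulli}(p(u))$. For $n \ge 1$ define $U_n(u) := \mathds{1}\{\sum_{i=1}^n X_i(u) = 1\}$, $Z_n(u) := \mathds{1}\{X_1(u) = \cdots = X_n(u) = 0\}$, $R_n := \sum_{u \in A} Z_n(u)\, p(u)$, $\hat R_n := \frac{1}{n}\sum_{u \in A} U_n(u)$, and $\lambda := \sum_{u \in A} p(u)$. For $\delta \in (0,1)$ let \[ \beta_n := \left(1+\sqrt{2}\right)\sqrt{\frac{\lambda \log(4/\delta)}{n}} + \frac{1}{3n}\log\frac{4}{\delta}. \] Then with probability at least $1-\delta$, \[ -\beta_n - \frac{\lambda}{n} \le R_n - \hat R_n \le \beta_n . \]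
   Context: Model: a single influencer is connected to a finite set $A$ of basic nodes; at each selection $i$ of the influencer, each node $u\in A$ is activated ($X_i(u)=1$) independently with probability $p(u)$, independently across selections. $R_n$ is the remaining potential (expected number of new activations at the next selection) and $\hat R_n$ is the Good-Turing estimator (proportion of hapaxes). *)

theory Defs
  imports "HOL-Probability.Probability"
begin

definition hapax :: "(nat \<Rightarrow> 'a \<Rightarrow> 'w \<Rightarrow> bool) \<Rightarrow> nat \<Rightarrow> 'a \<Rightarrow> 'w \<Rightarrow> real" where
  "hapax X n u \<omega> = of_bool ((\<Sum>i=1..n. of_bool (X i u \<omega>) :: nat) = 1)"

definition unseen :: "(nat \<Rightarrow> 'a \<Rightarrow> 'w \<Rightarrow> bool) \<Rightarrow> nat \<Rightarrow> 'a \<Rightarrow> 'w \<Rightarrow> real" where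
  "unseen X n u \<omega> = of_bool (\<forall>i\<in>{1..n}. \<not> X i u \<omega>)"

definition remaining :: "'a set \<Rightarrow> ('a \<Rightarrow> real) \<Rightarrow> (nat \<Rightarrow> 'a \<Rightarrow> 'w \<Rightarrow> bool) \<Rightarrow> nat \<Rightarrow> 'w \<Rightarrow> real" where
  "remaining A p X n \<omega> = (\<Sum>u\<in>A. unseen X n u \<omega> * p u)"

definition good_turing :: "'a set \<Rightarrow> (nat \<Rightarrow> 'a \<Rightarrow> 'w \<Rightarrow> bool) \<Rightarrow> nat \<Rightarrow> 'w \<Rightarrow> real" where
  "good_turing A X n \<omega> = (1 / real n) * (\<Sum>u\<in>A. hapax X n u \<omega>)"

definition beta_n :: "real \<Rightarrow> real \<Rightarrow> nat \<Rightarrow> real" where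
  "beta_n lam \<delta> n = (1 + sqrt 2) * sqrt (lam * ln (4 / \<delta>) / real n) + ln (4 / \<delta>) / (3 * real n)"

end

theory Submission
  imports Defs
begin

text \<open>Both \<open>R\<^sub>n\<close> and \<open>\<hat>R\<^sub>n\<close> are sums over the nodes of independent centred indicators,
  \<open>p(u) (Z\<^sub>n(u) - (1 - p(u))\<^sup>n)\<close> and \<open>(U\<^sub>n(u) - n p(u) (1 - p(u))\<^sup>n\<^sup>-\<^sup>1) / n\<close>. Bounding the moment
  generating function of every summand by a Bernstein-type expression and optimising the Chernoff
  bound gives four one-sided tails, each of probability \<open>\<delta>/4\<close>: variance factor \<open>\<lambda>/(2n)\<close> for
  \<open>R\<^sub>n\<close> and \<open>\<lambda>/n\<close> for \<open>\<hat>R\<^sub>n\<close>, with scale \<open>1/(3n)\<close> on the upper sides. The unseen indicator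
  needs the sharper bound, which exploits \<open>(1 - p)\<^sup>n \<le> exp (- n p)\<close>. Finally the bias
  \<open>E R\<^sub>n - E \<hat>R\<^sub>n = - \<Sum> p(u)\<^sup>2 (1 - p(u))\<^sup>n\<^sup>-\<^sup>1\<close> lies in \<open>[- \<lambda>/n, 0]\<close>.\<close>

section \<open>Elementary real inequalities\<close>

lemma DERIV_nonneg_imp_le_from_0:
  fixes f f' :: "real \<Rightarrow> real"
  assumes "\<And>t. (f has_real_derivative f' t) (at t)" "\<And>t. t \<ge> 0 \<Longrightarrow> f' t \<ge> 0" "y \<ge> 0"
  shows "f 0 \<le> f y"
  using assms by (intro DERIV_nonneg_imp_nondecreasing[of 0 y f]) auto

lemma exp_one_gt_8_div_3: "8/3 < exp (1::real)"
  using e_approx_32 by (simp add: abs_if split: if_splits)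

lemma exp_one_mult_le_exp: "exp 1 * x \<le> exp (x::real)"
proof -
  have "exp 1 * x \<le> exp 1 * exp (x - 1)"
    using exp_ge_add_one_self[of "x - 1"] by (intro mult_left_mono) auto
  then show ?thesis by (simp flip: exp_add)
qed

lemma one_minus_pow_le_exp:
  fixes p :: real assumes "p \<le> 1"
  shows "(1 - p) ^ n \<le> exp (- (real n * p))"
proof -
  have "(1 - p) ^ n \<le> exp (- p) ^ n"
    using exp_minus_ge[of p] assms by (intro power_mono) auto
  then show ?thesis by (simp flip: exp_of_nat_mult)
qed

lemma exp_neg_le_quadratic:
  fixes y :: real assumes "y \<ge> 0"
  shows "exp (- y) \<le> 1 - y + y\<^sup>2 / 2"
proof -
  have "(\<lambda>t. 1 - t + t\<^sup>2 / 2 - exp (- t)) 0 \<le> (\<lambda>t. 1 - t + t\<^sup>2 / 2 - exp (- t)) y"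
  proof (rule DERIV_nonneg_imp_le_from_0)
    show "((\<lambda>t. 1 - t + t\<^sup>2 / 2 - exp (- t)) has_real_derivative t - 1 + exp (- t)) (at t)" for t
      by (auto intro!: derivative_eq_intros)
    show "0 \<le> t - 1 + exp (- t)" for t :: real
      using exp_minus_ge[of t] by simp
  qed fact
  then show ?thesis by simp
qed

lemma exp_minus_one_minus_le_Bernstein:
  fixes y :: real assumes "y \<ge> 0"
  shows "(1 - y / 3) * (exp y - 1 - y) \<le> y\<^sup>2 / 2"
proof -
  have deriv2_nonneg: "0 \<le> 1 - exp t + t * exp t" if "t \<ge> 0" for t :: real
  proof -
    have "(\<lambda>t. 1 - exp t + t * exp t) 0 \<le> (\<lambda>t. 1 - exp t + t * exp t) t"
      by (rule DERIV_nonneg_imp_le_from_0[where f' = "\<lambda>t. t * exp t"])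
        (auto intro!: derivative_eq_intros that)
    then show ?thesis by simp
  qed
  have deriv_nonneg: "0 \<le> t + 2 - 2 * exp t + t * exp t" if "t \<ge> 0" for t :: real
  proof -
    have "(\<lambda>t. t + 2 - 2 * exp t + t * exp t) 0 \<le> (\<lambda>t. t + 2 - 2 * exp t + t * exp t) t"
      by (rule DERIV_nonneg_imp_le_from_0[where f' = "\<lambda>t. 1 - exp t + t * exp t"])
        (auto intro!: derivative_eq_intros that deriv2_nonneg)
    then show ?thesis by simp
  qed
  have "(\<lambda>t. t\<^sup>2 / 2 - (1 - t / 3) * (exp t - 1 - t)) 0 \<le> (\<lambda>t. t\<^sup>2 / 2 - (1 - t / 3) * (exp t - 1 - t)) y"
  proof (rule DERIV_nonneg_imp_le_from_0)
    show "((\<lambda>t. t\<^sup>2 / 2 - (1 - t / 3) * (exp t - 1 - t)) has_real_derivative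
           (t + 2 - 2 * exp t + t * exp t) / 3) (at t)" for t :: real
      by (auto intro!: derivative_eq_intros simp: field_simps)
    show "0 \<le> (t + 2 - 2 * exp t + t * exp t) / 3" if "t \<ge> 0" for t :: real
      using deriv_nonneg[OF that] by simp
  qed fact
  then show ?thesis by simp
qed

lemma one_minus_exp_neg_poly_le_quartic:
  fixes x :: real assumes "x \<ge> 0"
  shows "1 - (1 + x) * exp (- x) \<le> x\<^sup>2 / 2 - x ^ 3 / 3 + x ^ 4 / 8"
proof -
  have "(\<lambda>t. t\<^sup>2 / 2 - t ^ 3 / 3 + t ^ 4 / 8 - 1 + (1 + t) * exp (- t)) 0
        \<le> (\<lambda>t. t\<^sup>2 / 2 - t ^ 3 / 3 + t ^ 4 / 8 - 1 + (1 + t) * exp (- t)) x"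
  proof (rule DERIV_nonneg_imp_le_from_0)
    show "((\<lambda>t. t\<^sup>2 / 2 - t ^ 3 / 3 + t ^ 4 / 8 - 1 + (1 + t) * exp (- t)) has_real_derivative
           t * (1 - t + t\<^sup>2 / 2 - exp (- t))) (at t)" for t :: real
      by (auto intro!: derivative_eq_intros
          simp: algebra_simps power2_eq_square power3_eq_cube eval_nat_numeral)
    show "0 \<le> t * (1 - t + t\<^sup>2 / 2 - exp (- t))" if "t \<ge> 0" for t :: real
      using exp_neg_le_quadratic[OF that] that by simp
  qed fact
  then show ?thesis by simp
qed

text \<open>The derivative \<open>x * exp (- x)\<close> of the left-hand side never exceeds \<open>1 / exp 1 < 3/8\<close>.\<close>
lemma one_minus_exp_neg_poly_le_linear:
  fixes x :: real assumes "x \<ge> 0"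
  shows "1 - (1 + x) * exp (- x) \<le> 3 * x / 8"
proof -
  have "(\<lambda>t. 3 * t / 8 - 1 + (1 + t) * exp (- t)) 0 \<le> (\<lambda>t. 3 * t / 8 - 1 + (1 + t) * exp (- t)) x"
  proof (rule DERIV_nonneg_imp_le_from_0)
    show "((\<lambda>t. 3 * t / 8 - 1 + (1 + t) * exp (- t)) has_real_derivative 3 / 8 - t * exp (- t)) (at t)"
      for t :: real
      by (auto intro!: derivative_eq_intros simp: algebra_simps)
    show "0 \<le> 3 / 8 - t * exp (- t)" if "t \<ge> 0" for t :: real
    proof -
      have "8 / 3 * t \<le> exp 1 * t"
        using exp_one_gt_8_div_3 that by (intro mult_right_mono) auto
      then have "8 / 3 * t \<le> exp t"
        using exp_one_mult_le_exp[of t] by linarith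
      then show ?thesis by (simp add: exp_minus field_simps)
    qed
  qed fact
  then show ?thesis by simp
qed

lemma mult_one_minus_pow_le:
  fixes p :: real assumes "0 \<le> p" "p \<le> 1" "n \<ge> 1"
  shows "p * (1 - p) ^ n \<le> 1 / (2 * real n)"
proof -
  have "2 * (real n * p) \<le> exp 1 * (real n * p)"
    using exp_one_gt_8_div_3 assms by (intro mult_right_mono) auto
  then have "2 * (real n * p) \<le> exp (real n * p)"
    using exp_one_mult_le_exp[of "real n * p"] by linarith
  then have "p * exp (- (real n * p)) \<le> 1 / (2 * real n)"
    using assms by (simp add: exp_minus field_simps)
  moreover have "p * (1 - p) ^ n \<le> p * exp (- (real n * p))"
    using one_minus_pow_le_exp[OF assms(2)] assms(1) by (rule mult_left_mono)
  ultimately show ?thesis by linarith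
qed

lemma one_minus_exp_neg_poly_mult_le:
  fixes x d :: real
  assumes x: "0 \<le> x" and d: "0 \<le> d" and D: "8 < 8 * x / 3 + 4 * d"
  shows "(1 - (1 + x) * exp (- x)) * (8 * x / 3 + 4 * d) \<le> x\<^sup>2 * exp d"
proof (cases "x \<le> 3 / 2")
  case True
  define P where "P = 1 / 2 - x / 3 + x\<^sup>2 / 8"
  have d1: "1 \<le> d" using D True by linarith
  have P0: "0 \<le> P"
  proof -
    have "P = (x - 4 / 3)\<^sup>2 / 8 + 5 / 18" by (simp add: P_def power2_eq_square field_simps)
    then show ?thesis by simp
  qed
  have "P * (8 * x / 3 + 4) = 9 / 4 - (3 / 2 - x) * (x\<^sup>2 + x / 3 + 1 / 2) / 3"
    by (simp add: P_def power2_eq_square field_simps)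
  also have "\<dots> \<le> 9 / 4" using True x by simp
  finally have P_bound: "P * (8 * x / 3 + 4) \<le> 9 / 4" .
  have "(1 - (1 + x) * exp (- x)) * (8 * x / 3 + 4 * d) \<le> x\<^sup>2 * P * (8 * x / 3 + 4 * d)"
    using one_minus_exp_neg_poly_le_quartic[OF x] x d
    by (intro mult_right_mono) (simp_all add: P_def power2_eq_square power3_eq_cube eval_nat_numeral
        algebra_simps)
  also have "\<dots> \<le> x\<^sup>2 * P * ((8 * x / 3 + 4) * d)"
    using mult_left_mono[OF d1, of x] x P0 by (intro mult_left_mono) (auto simp: algebra_simps)
  also have "\<dots> = x\<^sup>2 * (P * (8 * x / 3 + 4) * d)" by (simp add: algebra_simps)
  also have "\<dots> \<le> x\<^sup>2 * (exp 1 * d)"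
    using P_bound exp_one_gt_8_div_3 d by (intro mult_left_mono mult_right_mono) auto
  also have "\<dots> \<le> x\<^sup>2 * exp d" by (intro mult_left_mono exp_one_mult_le_exp) auto
  finally show ?thesis .
next
  case False
  have "(1 - (1 + x) * exp (- x)) * (8 * x / 3 + 4 * d) \<le> 3 * x / 8 * (8 * x / 3 + 4 * d)"
    using one_minus_exp_neg_poly_le_linear[OF x] x d by (intro mult_right_mono) auto
  also have "\<dots> = x\<^sup>2 + 3 / 2 * x * d" by (simp add: power2_eq_square field_simps)
  also have "\<dots> \<le> x\<^sup>2 * (1 + d)"
  proof -
    have "3 / 2 * x \<le> x\<^sup>2"
      using False mult_right_mono[of "3 / 2" x x] by (simp add: power2_eq_square)
    then have "3 / 2 * x * d \<le> x\<^sup>2 * d" using d by (rule mult_right_mono)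
    then show ?thesis by (simp add: algebra_simps)
  qed
  also have "\<dots> \<le> x\<^sup>2 * exp d" by (intro mult_left_mono) auto
  finally show ?thesis .
qed

section \<open>The moment generating function of a centred Bernoulli variable\<close>

definition centered_bernoulli_mgf :: "real \<Rightarrow> real \<Rightarrow> real" where
  "centered_bernoulli_mgf q t = (1 - q + q * exp t) * exp (- (t * q))"

lemma centered_bernoulli_mgf_le_Poisson:
  "centered_bernoulli_mgf q t \<le> exp (q * (exp t - 1 - t))"
proof -
  have "1 - q + q * exp t \<le> exp (q * (exp t - 1))"
    using exp_ge_add_one_self[of "q * (exp t - 1)"] by (simp add: algebra_simps)
  then have "centered_bernoulli_mgf q t \<le> exp (q * (exp t - 1)) * exp (- (t * q))"
    unfolding centered_bernoulli_mgf_def by (intro mult_right_mono) auto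
  then show ?thesis by (simp flip: exp_add add: algebra_simps)
qed

lemma centered_bernoulli_mgf_le_Hoeffding:
  assumes "0 \<le> q" "0 \<le> t"
  shows "centered_bernoulli_mgf q t \<le> exp (t\<^sup>2 / 8)"
proof -
  have pos: "0 < 1 + q * (exp t - 1)" using assms by (simp add: add_pos_nonneg)
  have "centered_bernoulli_mgf q t = exp (- t * q) * (1 + q * (exp t - 1))"
    by (simp add: centered_bernoulli_mgf_def algebra_simps)
  also have "\<dots> = exp (- t * q + ln (1 + q * (exp t - 1)))"
    using pos by (simp only: exp_add exp_ln)
  also have "\<dots> \<le> exp (t\<^sup>2 / 8)"
    using Hoeffdings_lemma_aux[OF assms(2,1)] by simp
  finally show ?thesis .
qed

lemma centered_bernoulli_mgf_neg_le:
  assumes "0 \<le> q" "0 \<le> z"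
  shows "centered_bernoulli_mgf q (- z) \<le> exp (q * z\<^sup>2 / 2)"
proof -
  have "q * (exp (- z) - 1 - (- z)) \<le> q * (z\<^sup>2 / 2)"
    using exp_neg_le_quadratic[OF assms(2)] assms(1) by (intro mult_left_mono) auto
  then show ?thesis
    using centered_bernoulli_mgf_le_Poisson[of q "- z"] by (simp add: order_trans)
qed

lemma centered_bernoulli_mgf_le_Bernstein:
  assumes "0 \<le> q" "0 \<le> z" "z < 3"
  shows "centered_bernoulli_mgf q z \<le> exp (q * z\<^sup>2 / (2 * (1 - z / 3)))"
proof -
  have "exp z - 1 - z \<le> z\<^sup>2 / (2 * (1 - z / 3))"
    using exp_minus_one_minus_le_Bernstein[OF assms(2)] assms(3) by (simp add: field_simps)
  then have "q * (exp z - 1 - z) \<le> q * (z\<^sup>2 / (2 * (1 - z / 3)))"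
    using assms(1) by (rule mult_left_mono)
  then show ?thesis
    using centered_bernoulli_mgf_le_Poisson[of q z] by (simp add: order_trans)
qed

lemma centered_bernoulli_mgf_rare_le_below:
  assumes q: "0 \<le> q" "q \<le> exp (- m)" and x: "0 \<le> x" "x \<le> m" and D: "8 < 4 * m - 4 * x / 3"
  shows "centered_bernoulli_mgf q x \<le> exp (x\<^sup>2 / (4 * m - 4 * x / 3))"
proof -
  define d where "d = m - x"
  have "q * (exp x - 1 - x) \<le> exp (- m) * (exp x - 1 - x)"
    by (intro mult_right_mono q(2)) (use exp_ge_add_one_self[of x] in linarith)
  also have "exp (- m) * (exp x - 1 - x) = exp (- d) * (1 - (1 + x) * exp (- x))"
  proof -
    have "exp (- m) = exp (- d) * exp (- x)" by (simp add: d_def flip: exp_add)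
    moreover have "exp (- x) * exp x = 1" by (simp flip: exp_add)
    ultimately show ?thesis by (simp add: algebra_simps)
  qed
  also have "\<dots> \<le> x\<^sup>2 / (4 * m - 4 * x / 3)"
  proof -
    have "8 * x / 3 + 4 * d = 4 * m - 4 * x / 3" by (simp add: d_def)
    then have "(1 - (1 + x) * exp (- x)) * (4 * m - 4 * x / 3) \<le> x\<^sup>2 * exp d"
      using one_minus_exp_neg_poly_mult_le[of x d] x D by (simp add: d_def)
    then have "exp (- d) * ((1 - (1 + x) * exp (- x)) * (4 * m - 4 * x / 3)) \<le> exp (- d) * (x\<^sup>2 * exp d)"
      by (rule mult_left_mono) simp
    also have "\<dots> = x\<^sup>2" by (simp flip: exp_add)
    finally show ?thesis using D by (simp add: pos_le_divide_eq mult.assoc)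
  qed
  finally show ?thesis
    using centered_bernoulli_mgf_le_Poisson[of q x] by (simp add: order_trans)
qed

text \<open>Here \<open>4 m - 4 x / 3 > 8\<close> forces \<open>m > 3\<close>, so the excess \<open>e = x - m\<close> is dwarfed by
  \<open>x\<^sup>2 / (4 m - 4 x / 3)\<close>.\<close>
lemma centered_bernoulli_mgf_rare_le_above:
  assumes q: "0 \<le> q" "q \<le> exp (- m)" and x: "m < x" and D: "8 < 4 * m - 4 * x / 3"
  shows "centered_bernoulli_mgf q x \<le> exp (x\<^sup>2 / (4 * m - 4 * x / 3))"
proof -
  define e where "e = x - m"
  have e: "0 < e" "x = m + e" using x by (auto simp: e_def)
  have m: "3 < m" using D e by linarith
  have "exp (- m) \<le> 1" using m by simp
  then have "q \<le> 1" using q(2) by linarith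
  then have "0 \<le> 1 - q + q * exp x" using q(1) by simp
  moreover have "exp (- (x * q)) \<le> 1" using q x m by simp
  ultimately have "centered_bernoulli_mgf q x \<le> (1 - q + q * exp x) * 1"
    unfolding centered_bernoulli_mgf_def by (intro mult_left_mono)
  also have "\<dots> \<le> 1 + exp e"
    using mult_right_mono[OF q(2), of "exp x"] q(1) by (simp add: e_def flip: exp_add)
  also have "\<dots> \<le> exp (ln 2 + e)" using e by (simp add: exp_add)
  also have "\<dots> \<le> exp (x\<^sup>2 / (4 * m - 4 * x / 3))"
  proof -
    have "(ln 2 + e) * (4 * m - 4 * x / 3) \<le> (1 + e) * (4 * m - 4 * x / 3)"
      using ln_2_less_1 D by (intro mult_right_mono) auto
    also have "\<dots> \<le> x\<^sup>2"
    proof -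
      have "x\<^sup>2 - (1 + e) * (4 * m - 4 * x / 3) = 7 / 3 * (e - m / 7)\<^sup>2 + m * (20 * m / 21 - 8 / 3) + 4 * e / 3"
        by (simp add: e(2) power2_eq_square field_simps)
      moreover have "0 \<le> m * (20 * m / 21 - 8 / 3)" using m by simp
      ultimately show ?thesis using e zero_le_power2[of "e - m / 7"] by linarith
    qed
    finally show ?thesis using D by (simp add: pos_le_divide_eq)
  qed
  finally show ?thesis .
qed

text \<open>When \<open>q\<close> is exponentially small in \<open>m\<close> this beats Hoeffding's \<open>x\<^sup>2 / 8\<close>.\<close>
lemma centered_bernoulli_mgf_rare_le:
  assumes q: "0 \<le> q" "q \<le> exp (- m)" and x: "0 \<le> x" "x < 3 * m"
  shows "centered_bernoulli_mgf q x \<le> exp (x\<^sup>2 / (4 * m - 4 * x / 3))"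
proof (cases "4 * m - 4 * x / 3 \<le> 8")
  case True
  have "x\<^sup>2 / 8 \<le> x\<^sup>2 / (4 * m - 4 * x / 3)"
    using True x by (intro divide_left_mono) auto
  then show ?thesis
    using centered_bernoulli_mgf_le_Hoeffding[OF q(1) x(1)] by (simp add: order_trans)
next
  case False
  then show ?thesis
    using centered_bernoulli_mgf_rare_le_below[OF q x(1)] centered_bernoulli_mgf_rare_le_above[OF q]
    by (cases "x \<le> m") auto
qed

lemma centered_bernoulli_mgf_unseen_le:
  fixes p s :: real
  assumes p: "0 \<le> p" "p \<le> 1" and n: "n \<ge> 1" and s: "0 \<le> s" "s < 3 * real n"
  shows "centered_bernoulli_mgf ((1 - p) ^ n) (s * p)
           \<le> exp (p / (2 * real n) * s\<^sup>2 / (2 * (1 - s / (3 * real n))))"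
proof (cases "p = 0")
  case True
  then show ?thesis by (simp add: centered_bernoulli_mgf_def)
next
  case False
  then have "0 < p" using p by simp
  have "centered_bernoulli_mgf ((1 - p) ^ n) (s * p) \<le> exp ((s * p)\<^sup>2 / (4 * (real n * p) - 4 * (s * p) / 3))"
    using one_minus_pow_le_exp[OF p(2), of n] p s \<open>0 < p\<close>
    by (intro centered_bernoulli_mgf_rare_le) auto
  also have "(s * p)\<^sup>2 / (4 * (real n * p) - 4 * (s * p) / 3) = p / (2 * real n) * s\<^sup>2 / (2 * (1 - s / (3 * real n)))"
    using \<open>0 < p\<close> n s by (simp add: power2_eq_square field_simps)
  finally show ?thesis .
qed

lemma centered_bernoulli_mgf_neg_unseen_le:
  fixes p s :: real
  assumes p: "0 \<le> p" "p \<le> 1" and n: "n \<ge> 1" and s: "0 \<le> s"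
  shows "centered_bernoulli_mgf ((1 - p) ^ n) (- (s * p)) \<le> exp (p / (2 * real n) * s\<^sup>2 / 2)"
proof -
  have "(1 - p) ^ n * (s * p)\<^sup>2 / 2 = (p * (1 - p) ^ n) * (p * s\<^sup>2 / 2)"
    by (simp add: power2_eq_square)
  also have "\<dots> \<le> 1 / (2 * real n) * (p * s\<^sup>2 / 2)"
    using mult_one_minus_pow_le[OF p n] p by (intro mult_right_mono) auto
  finally show ?thesis
    using centered_bernoulli_mgf_neg_le[of "(1 - p) ^ n" "s * p"] p s by (simp add: order_trans)
qed

lemma centered_bernoulli_mgf_hapax_le:
  fixes r p s :: real
  assumes r: "0 \<le> r" "r \<le> real n * p" and n: "n \<ge> 1" and s: "0 \<le> s" "s < 3 * real n"
  shows "centered_bernoulli_mgf r (s / real n) \<le> exp (p / real n * s\<^sup>2 / (2 * (1 - s / (3 * real n))))"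
proof -
  have z: "0 \<le> s / real n" "s / real n < 3" using s n by (auto simp: field_simps)
  have den: "s / real n / 3 = s / (3 * real n)" "0 < 1 - s / (3 * real n)"
    using z by auto
  have "centered_bernoulli_mgf r (s / real n) \<le> exp (r * (s / real n)\<^sup>2 / (2 * (1 - s / (3 * real n))))"
    using centered_bernoulli_mgf_le_Bernstein[OF r(1) z] unfolding den(1) .
  also have "\<dots> \<le> exp (real n * p * (s / real n)\<^sup>2 / (2 * (1 - s / (3 * real n))))"
    using r den(2) by (auto intro!: divide_right_mono mult_right_mono)
  also have "real n * p * (s / real n)\<^sup>2 = p / real n * s\<^sup>2"
    using n by (simp add: power2_eq_square)
  finally show ?thesis by (simp add: mult.assoc)
qed

lemma centered_bernoulli_mgf_neg_hapax_le:
  fixes r p s :: real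
  assumes r: "0 \<le> r" "r \<le> real n * p" and n: "n \<ge> 1" and s: "0 \<le> s"
  shows "centered_bernoulli_mgf r (- (s / real n)) \<le> exp (p / real n * s\<^sup>2 / 2)"
proof -
  have "r * (s / real n)\<^sup>2 / 2 \<le> real n * p * (s / real n)\<^sup>2 / 2"
    using r by (intro divide_right_mono mult_right_mono) auto
  also have "\<dots> = p / real n * s\<^sup>2 / 2" using n by (simp add: power2_eq_square)
  finally show ?thesis
    using centered_bernoulli_mgf_neg_le[of r "s / real n"] r s by (simp add: order_trans)
qed

section \<open>Chernoff and Bernstein bounds for independent sums\<close>

lemma (in prob_space) nn_integral_exp_centered_indicator:
  assumes "{\<omega>\<in>space M. P \<omega>} \<in> events"
  defines "r \<equiv> prob {\<omega>\<in>space M. P \<omega>}"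
  shows "(\<integral>\<^sup>+\<omega>. ennreal (exp (s * (a * (of_bool (P \<omega>) - r)))) \<partial>M)
         = ennreal (centered_bernoulli_mgf r (s * a))"
proof -
  define E where "E = {\<omega>\<in>space M. P \<omega>}"
  have E[measurable]: "E \<in> sets M" using assms(1) by (simp add: E_def)
  have r: "0 \<le> r" "r \<le> 1" by (simp_all add: r_def)
  have "(\<integral>\<^sup>+\<omega>. ennreal (exp (s * (a * (of_bool (P \<omega>) - r)))) \<partial>M)
        = (\<integral>\<^sup>+\<omega>. ennreal (exp (s * (a * (1 - r)))) * indicator E \<omega>
                 + ennreal (exp (s * (a * (0 - r)))) * indicator (space M - E) \<omega> \<partial>M)"
    by (intro nn_integral_cong) (auto simp: E_def indicator_def)
  also have "\<dots> = ennreal (exp (s * (a * (1 - r)))) * emeasure M E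
                 + ennreal (exp (s * (a * (0 - r)))) * emeasure M (space M - E)"
    by (simp add: nn_integral_add nn_integral_cmult_indicator)
  also have "emeasure M E = ennreal r" by (simp add: emeasure_eq_measure E_def r_def)
  also have "emeasure M (space M - E) = ennreal (1 - r)"
    using prob_compl[OF E] by (simp add: emeasure_eq_measure E_def r_def)
  also have "ennreal (exp (s * (a * (1 - r)))) * ennreal r + ennreal (exp (s * (a * (0 - r)))) * ennreal (1 - r)
             = ennreal (exp (s * (a * (1 - r))) * r + exp (s * (a * (0 - r))) * (1 - r))"
    using r by (simp add: ennreal_mult ennreal_plus)
  also have "exp (s * (a * (1 - r))) * r + exp (s * (a * (0 - r))) * (1 - r) = centered_bernoulli_mgf r (s * a)"
    by (simp add: centered_bernoulli_mgf_def algebra_simps flip: exp_add)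
  finally show ?thesis .
qed

lemma (in prob_space) indep_sum_tail_le_Chernoff:
  fixes Y :: "'i \<Rightarrow> 'a \<Rightarrow> real"
  assumes fin: "finite I" and ind: "indep_vars (\<lambda>_. borel) Y I" and s: "s > 0"
    and mgf: "\<And>i. i \<in> I \<Longrightarrow> (\<integral>\<^sup>+x. ennreal (exp (s * Y i x)) \<partial>M) \<le> ennreal (exp (\<phi> i))"
  shows "prob {x\<in>space M. t \<le> (\<Sum>i\<in>I. Y i x)} \<le> exp ((\<Sum>i\<in>I. \<phi> i) - s * t)"
proof -
  have meas: "(\<lambda>x. \<Sum>i\<in>I. Y i x) \<in> borel_measurable M"
    using ind unfolding indep_vars_def by (intro borel_measurable_sum) blast
  have "ennreal (prob {x\<in>space M. t \<le> (\<Sum>i\<in>I. Y i x)}) = emeasure M {x\<in>space M. (\<Sum>i\<in>I. Y i x) \<ge> t}"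
    by (simp add: emeasure_eq_measure)
  also have "\<dots> \<le> ennreal (exp (- s * t)) *
                   (\<integral>\<^sup>+x. ennreal (exp (s * (\<Sum>i\<in>I. Y i x))) * indicator (space M) x \<partial>M)"
    by (intro Chernoff_ineq_nn_integral_ge s) (use meas in auto)
  also have "(\<integral>\<^sup>+x. ennreal (exp (s * (\<Sum>i\<in>I. Y i x))) * indicator (space M) x \<partial>M)
             = (\<integral>\<^sup>+x. (\<Prod>i\<in>I. ennreal (exp (s * Y i x))) \<partial>M)"
    by (intro nn_integral_cong) (simp_all add: sum_distrib_left exp_sum fin prod_ennreal)
  also have "\<dots> = (\<Prod>i\<in>I. \<integral>\<^sup>+x. ennreal (exp (s * Y i x)) \<partial>M)"
    by (intro indep_vars_nn_integral fin indep_vars_compose2[OF ind]) auto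
  also have "ennreal (exp (- s * t)) * \<dots> \<le> ennreal (exp (- s * t)) * (\<Prod>i\<in>I. ennreal (exp (\<phi> i)))"
    by (intro mult_left_mono prod_mono_ennreal mgf) auto
  also have "\<dots> = ennreal (exp (- s * t) * (\<Prod>i\<in>I. exp (\<phi> i)))"
    by (simp add: prod_ennreal prod_nonneg flip: ennreal_mult)
  also have "exp (- s * t) * (\<Prod>i\<in>I. exp (\<phi> i)) = exp ((\<Sum>i\<in>I. \<phi> i) - s * t)"
    by (simp add: exp_sum fin exp_diff exp_minus field_simps)
  finally show ?thesis
    by (subst (asm) ennreal_le_iff) simp_all
qed

text \<open>The Chernoff bound at \<open>s = x\<^sub>0 / (1 + c x\<^sub>0)\<close> with \<open>x\<^sub>0 = sqrt (2 L / V)\<close>,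
  the optimiser of the Bernstein exponent.\<close>
lemma (in prob_space) indep_sum_Bernstein_tail:
  fixes Y :: "'i \<Rightarrow> 'a \<Rightarrow> real"
  assumes fin: "finite I" and ind: "indep_vars (\<lambda>_. borel) Y I" and c: "c \<ge> 0" and L: "L > 0"
    and V: "(\<Sum>i\<in>I. v i) > 0"
    and mgf: "\<And>i s. i \<in> I \<Longrightarrow> s > 0 \<Longrightarrow> c * s < 1 \<Longrightarrow>
               (\<integral>\<^sup>+x. ennreal (exp (s * Y i x)) \<partial>M) \<le> ennreal (exp (v i * s\<^sup>2 / (2 * (1 - c * s))))"
  shows "prob {x\<in>space M. sqrt (2 * (\<Sum>i\<in>I. v i) * L) + c * L \<le> (\<Sum>i\<in>I. Y i x)} \<le> exp (- L)"
proof -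
  define V where "V = (\<Sum>i\<in>I. v i)"
  define x0 where "x0 = sqrt (2 * L / V)"
  define w where "w = 1 + c * x0"
  define s where "s = x0 / w"
  have V0: "V > 0" using V by (simp add: V_def)
  have x0: "x0 > 0" using V0 L by (simp add: x0_def)
  have w: "w > 0" using c x0 by (simp add: w_def add_pos_nonneg)
  have s0: "s > 0" using x0 w by (simp add: s_def)
  have cs: "1 - c * s = 1 / w" using w by (simp add: s_def w_def field_simps)
  moreover have "0 < 1 / w" using w by simp
  ultimately have cs1: "c * s < 1" by linarith
  have Lx: "L = V * x0\<^sup>2 / 2" using V0 L by (simp add: x0_def)
  have sq: "sqrt (2 * V * L) = V * x0"
  proof -
    have "2 * V * L = (V * x0)\<^sup>2" unfolding Lx by (simp add: power2_eq_square)
    then show ?thesis using V0 x0 by simp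
  qed
  have "prob {x\<in>space M. sqrt (2 * V * L) + c * L \<le> (\<Sum>i\<in>I. Y i x)}
        \<le> exp ((\<Sum>i\<in>I. v i * s\<^sup>2 / (2 * (1 - c * s))) - s * (sqrt (2 * V * L) + c * L))"
    by (rule indep_sum_tail_le_Chernoff[OF fin ind s0]) (rule mgf; use s0 cs1 in auto)
  also have "(\<Sum>i\<in>I. v i * s\<^sup>2 / (2 * (1 - c * s))) - s * (sqrt (2 * V * L) + c * L)
             = V * (x0 / w)\<^sup>2 * w / 2 - x0 / w * (V * x0 + c * (V * x0\<^sup>2 / 2))"
    unfolding sq cs by (subst Lx) (simp add: V_def s_def sum_divide_distrib sum_distrib_right)
  also have "\<dots> = V * x0\<^sup>2 / w * (1 / 2 - 1 - c * x0 / 2)"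
    using w by (simp add: field_simps power2_eq_square)
  also have "\<dots> = - L"
    using w by (simp add: Lx w_def field_simps)
  finally show ?thesis by (simp add: V_def)
qed

section \<open>The activation model\<close>

lemma sum_of_bool_eq_1_iff:
  assumes "finite S"
  shows "((\<Sum>i\<in>S. of_bool (P i) :: nat) = 1) \<longleftrightarrow> (\<exists>k\<in>S. \<forall>i\<in>S. P i \<longleftrightarrow> i = k)"
proof -
  have "(\<Sum>i\<in>S. of_bool (P i) :: nat) = card {i\<in>S. P i}"
    using assms by (simp add: Int_def conj_commute)
  also have "\<dots> = 1 \<longleftrightarrow> (\<exists>k. {i\<in>S. P i} = {k})" by (simp only: One_nat_def card_1_singleton_iff)
  finally show ?thesis by blast
qed

locale activation_model = prob_space M for M :: "'w measure" +
  fixes A :: "'a set" and p :: "'a \<Rightarrow> real" and X :: "nat \<Rightarrow> 'a \<Rightarrow> 'w \<Rightarrow> bool" and n :: nat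
  assumes finite_nodes: "finite A"
    and p_range: "\<And>u. u \<in> A \<Longrightarrow> 0 \<le> p u \<and> p u \<le> 1"
    and indep: "indep_vars (\<lambda>_. count_space UNIV) (\<lambda>(i, u). X i u) ({1..} \<times> A)"
    and distr_X: "\<And>i u. i \<ge> 1 \<Longrightarrow> u \<in> A \<Longrightarrow>
           distr M (count_space UNIV) (X i u) = measure_pmf (bernoulli_pmf (p u))"
    and n_pos: "n \<ge> 1"
begin

lemma measurable_X: "i \<ge> 1 \<Longrightarrow> u \<in> A \<Longrightarrow> X i u \<in> measurable M (count_space UNIV)"
  using indep unfolding indep_vars_def by fastforce

lemma prob_X_eq:
  assumes "i \<ge> 1" "u \<in> A"
  shows "prob (X i u -` {b} \<inter> space M) = (if b then p u else 1 - p u)"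
proof -
  have "prob (X i u -` {b} \<inter> space M) = measure (distr M (count_space UNIV) (X i u)) {b}"
    using measurable_X[OF assms] by (simp add: measure_distr)
  also have "\<dots> = pmf (bernoulli_pmf (p u)) b"
    using distr_X[OF assms] by (simp add: measure_pmf_single)
  finally show ?thesis using p_range[OF assms(2)] by simp
qed

lemma prob_history_eq:
  assumes u: "u \<in> A"
  shows "prob {\<omega>\<in>space M. \<forall>i\<in>{1..n}. X i u \<omega> = h i} = (\<Prod>i=1..n. if h i then p u else 1 - p u)"
proof -
  let ?J = "{1..n} \<times> {u}" and ?Xj = "\<lambda>(i, u). X i u"
  have J: "?J = (\<lambda>i. (i, u)) ` {1..n}" by auto
  then have "(\<Inter>j\<in>?J. ?Xj j -` {h (fst j)} \<inter> space M) = (\<Inter>i\<in>{1..n}. X i u -` {h i} \<inter> space M)"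
    by simp
  also have "\<dots> = {\<omega>\<in>space M. \<forall>i\<in>{1..n}. X i u \<omega> = h i}"
    using n_pos by auto
  finally have "prob {\<omega>\<in>space M. \<forall>i\<in>{1..n}. X i u \<omega> = h i} = prob (\<Inter>j\<in>?J. ?Xj j -` {h (fst j)} \<inter> space M)"
    by simp
  also have "\<dots> = (\<Prod>j\<in>?J. prob (?Xj j -` {h (fst j)} \<inter> space M))"
    using u n_pos by (intro indep_varsD[OF indep]) auto
  also have "\<dots> = (\<Prod>i=1..n. prob (X i u -` {h i} \<inter> space M))"
    using J by (simp add: prod.reindex inj_on_def)
  also have "\<dots> = (\<Prod>i=1..n. if h i then p u else 1 - p u)"
    using u by (intro prod.cong refl) (simp add: prob_X_eq)
  finally show ?thesis .
qed

text \<open>\<open>\<lambda>i\<in>{1..n}. X i u \<omega>\<close> is the history of node \<open>u\<close> during the first \<open>n\<close> selections;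
  every per-node statistic below is a function of it.\<close>
lemma measurable_history_fun:
  assumes "u \<in> A" "space N = UNIV"
  shows "(\<lambda>\<omega>. f (\<lambda>i\<in>{1..n}. X i u \<omega>)) \<in> measurable M N"
proof -
  have "(\<lambda>\<omega>. \<lambda>i\<in>{1..n}. X i u \<omega>) \<in> measurable M (PiM {1..n} (\<lambda>_. count_space UNIV))"
    using assms(1) by (intro measurable_restrict measurable_X) auto
  also have "PiM {1..n} (\<lambda>_. count_space UNIV) = count_space (PiE {1..n} (\<lambda>_. UNIV :: bool set))"
    by (rule count_space_PiM_finite) auto
  finally show ?thesis
    by (rule measurable_compose) (simp add: assms(2))
qed

lemma indep_vars_history_fun:
  "indep_vars (\<lambda>_. borel) (\<lambda>u \<omega>. f u (\<lambda>i\<in>{1..n}. X i u \<omega>)) A"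
proof -
  define K where "K u = {1..n} \<times> {u}" for u :: 'a
  define H where "H u F = f u (\<lambda>i\<in>{1..n}. F (i, u))" for u and F :: "nat \<times> 'a \<Rightarrow> bool"
  have "indep_vars (\<lambda>u. PiM (K u) (\<lambda>_. count_space UNIV)) (\<lambda>u \<omega>. \<lambda>j\<in>K u. case_prod X j \<omega>) A"
    by (rule indep_vars_restrict[OF indep]) (auto simp: K_def disjoint_family_on_def)
  moreover have "H u \<in> measurable (PiM (K u) (\<lambda>_. count_space UNIV)) borel" for u
    by (subst count_space_PiM_finite) (auto simp: K_def)
  ultimately have "indep_vars (\<lambda>_. borel) (\<lambda>u \<omega>. H u (\<lambda>j\<in>K u. case_prod X j \<omega>)) A"
    by (rule indep_vars_compose2[where Y = H])
  moreover have "(\<lambda>\<omega>. H u (\<lambda>j\<in>K u. case_prod X j \<omega>)) = (\<lambda>\<omega>. f u (\<lambda>i\<in>{1..n}. X i u \<omega>))" for u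
    unfolding H_def K_def by (intro ext arg_cong[where f = "f u"] restrict_ext) auto
  ultimately show ?thesis by (subst (asm) indep_vars_cong) auto
qed


lemma prob_unseen: "u \<in> A \<Longrightarrow> prob {\<omega>\<in>space M. \<forall>i\<in>{1..n}. \<not> X i u \<omega>} = (1 - p u) ^ n"
  using prob_history_eq[of u "\<lambda>_. False"] by simp

lemma prob_hapax:
  assumes u: "u \<in> A"
  shows "prob {\<omega>\<in>space M. (\<Sum>i=1..n. of_bool (X i u \<omega>) :: nat) = 1} = real n * p u * (1 - p u) ^ (n - 1)"
proof -
  define B where "B k = {\<omega>\<in>space M. \<forall>i\<in>{1..n}. X i u \<omega> = (i = k)}" for k
  have "{\<omega>\<in>space M. (\<Sum>i=1..n. of_bool (X i u \<omega>) :: nat) = 1} = (\<Union>k\<in>{1..n}. B k)"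
    unfolding sum_of_bool_eq_1_iff[OF finite_atLeastAtMost] by (auto simp: B_def)
  moreover have "prob (\<Union>k\<in>{1..n}. B k) = (\<Sum>k\<in>{1..n}. prob (B k))"
  proof (rule measure_finite_Union)
    show "B ` {1..n} \<subseteq> events"
      using measurable_history_fun[OF u, of "count_space UNIV" "\<lambda>h. \<forall>i\<in>{1..n}. h i = (i = k)" for k]
      by (auto simp: B_def intro!: predE)
  qed (auto simp: B_def disjoint_family_on_def)
  moreover have "prob (B k) = p u * (1 - p u) ^ (n - 1)" if k: "k \<in> {1..n}" for k
  proof -
    have "prob (B k) = p u * (\<Prod>i\<in>{1..n} - {k}. if i = k then p u else 1 - p u)"
      using prob_history_eq[OF u, of "\<lambda>i. i = k"] k by (simp add: B_def prod.remove)
    also have "(\<Prod>i\<in>{1..n} - {k}. if i = k then p u else 1 - p u) = (\<Prod>i\<in>{1..n} - {k}. 1 - p u)"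
      by (rule prod.cong) auto
    also have "\<dots> = (1 - p u) ^ (n - 1)" using k by simp
    finally show ?thesis .
  qed
  ultimately show ?thesis by simp
qed

lemma history_indicator_sum_tail:
  fixes E :: "'a \<Rightarrow> (nat \<Rightarrow> bool) \<Rightarrow> bool"
  assumes r: "\<And>u. u \<in> A \<Longrightarrow> r u = prob {\<omega>\<in>space M. E u (\<lambda>i\<in>{1..n}. X i u \<omega>)}"
    and c: "0 \<le> c" and L: "0 < L" and V: "0 < (\<Sum>u\<in>A. v u)"
    and mgf: "\<And>u s. u \<in> A \<Longrightarrow> 0 < s \<Longrightarrow> c * s < 1 \<Longrightarrow>
               centered_bernoulli_mgf (r u) (s * a u) \<le> exp (v u * s\<^sup>2 / (2 * (1 - c * s)))"
  shows "prob {\<omega>\<in>space M. sqrt (2 * (\<Sum>u\<in>A. v u) * L) + c * L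
            \<le> (\<Sum>u\<in>A. a u * (of_bool (E u (\<lambda>i\<in>{1..n}. X i u \<omega>)) - r u))} \<le> exp (- L)"
proof (rule indep_sum_Bernstein_tail[OF finite_nodes _ c L V])
  show "indep_vars (\<lambda>_. borel) (\<lambda>u \<omega>. a u * (of_bool (E u (\<lambda>i\<in>{1..n}. X i u \<omega>)) - r u)) A"
    using indep_vars_history_fun[of "\<lambda>u h. a u * (of_bool (E u h) - r u)"] by simp
next
  fix u s assume u: "u \<in> A" and s: "0 < s" "c * s < 1"
  have "{\<omega>\<in>space M. E u (\<lambda>i\<in>{1..n}. X i u \<omega>)} \<in> events"
    using measurable_history_fun[OF u, of "count_space UNIV" "E u"] by (auto intro!: predE simp: pred_def)
  then show "(\<integral>\<^sup>+\<omega>. ennreal (exp (s * (a u * (of_bool (E u (\<lambda>i\<in>{1..n}. X i u \<omega>)) - r u)))) \<partial>M)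
             \<le> ennreal (exp (v u * s\<^sup>2 / (2 * (1 - c * s))))"
    using mgf[OF u s] by (simp add: nn_integral_exp_centered_indicator r[OF u])
qed

lemma remaining_tails:
  assumes L: "0 < L" and lam: "0 < (\<Sum>u\<in>A. p u)"
  defines "S \<equiv> sqrt ((\<Sum>u\<in>A. p u) * L / real n)" and "ER \<equiv> (\<Sum>u\<in>A. p u * (1 - p u) ^ n)"
  shows "prob {\<omega>\<in>space M. S + L / (3 * real n) \<le> remaining A p X n \<omega> - ER} \<le> exp (- L)"
    and "prob {\<omega>\<in>space M. S \<le> ER - remaining A p X n \<omega>} \<le> exp (- L)"
proof -
  let ?E = "\<lambda>u h. \<forall>i\<in>{1..n}. \<not> h i"
  have r: "(1 - p u) ^ n = prob {\<omega>\<in>space M. ?E u (\<lambda>i\<in>{1..n}. X i u \<omega>)}" if "u \<in> A" for u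
    using prob_unseen[OF that] by simp
  have V: "0 < (\<Sum>u\<in>A. p u / (2 * real n))" and S: "sqrt (2 * (\<Sum>u\<in>A. p u / (2 * real n)) * L) = S"
    using lam n_pos by (simp_all add: S_def flip: sum_divide_distrib)
  have dev: "(\<Sum>u\<in>A. a * p u * (of_bool (?E u (\<lambda>i\<in>{1..n}. X i u \<omega>)) - (1 - p u) ^ n))
             = a * (remaining A p X n \<omega> - ER)" for a \<omega>
    by (simp add: remaining_def unseen_def ER_def sum_distrib_left sum_subtractf algebra_simps)
  have "prob {\<omega>\<in>space M. S + 1 / (3 * real n) * L
          \<le> (\<Sum>u\<in>A. 1 * p u * (of_bool (?E u (\<lambda>i\<in>{1..n}. X i u \<omega>)) - (1 - p u) ^ n))} \<le> exp (- L)"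
    unfolding S[symmetric]
  proof (rule history_indicator_sum_tail[OF r _ L V])
    fix u s assume u: "u \<in> A" and s: "0 < s" "1 / (3 * real n) * s < 1"
    then show "centered_bernoulli_mgf ((1 - p u) ^ n) (s * (1 * p u))
                 \<le> exp (p u / (2 * real n) * s\<^sup>2 / (2 * (1 - 1 / (3 * real n) * s)))"
      using centered_bernoulli_mgf_unseen_le[of "p u" n s] p_range[OF u] n_pos
      by (simp add: field_simps)
  qed (auto intro: divide_nonneg_nonneg)
  then show "prob {\<omega>\<in>space M. S + L / (3 * real n) \<le> remaining A p X n \<omega> - ER} \<le> exp (- L)"
    by (simp only: dev) simp
  have "prob {\<omega>\<in>space M. S + 0 * L
          \<le> (\<Sum>u\<in>A. - 1 * p u * (of_bool (?E u (\<lambda>i\<in>{1..n}. X i u \<omega>)) - (1 - p u) ^ n))} \<le> exp (- L)"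
    unfolding S[symmetric]
  proof (rule history_indicator_sum_tail[OF r _ L V])
    fix u s assume u: "u \<in> A" and s: "0 < s" "0 * s < (1::real)"
    then show "centered_bernoulli_mgf ((1 - p u) ^ n) (s * (- 1 * p u))
                 \<le> exp (p u / (2 * real n) * s\<^sup>2 / (2 * (1 - 0 * s)))"
      using centered_bernoulli_mgf_neg_unseen_le[of "p u" n s] p_range[OF u] n_pos by simp
  qed auto
  then show "prob {\<omega>\<in>space M. S \<le> ER - remaining A p X n \<omega>} \<le> exp (- L)"
    by (simp only: dev) simp
qed

lemma good_turing_tails:
  assumes L: "0 < L" and lam: "0 < (\<Sum>u\<in>A. p u)"
  defines "S \<equiv> sqrt (2 * (\<Sum>u\<in>A. p u) * L / real n)" and "EH \<equiv> (\<Sum>u\<in>A. p u * (1 - p u) ^ (n - 1))"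
  shows "prob {\<omega>\<in>space M. S + L / (3 * real n) \<le> good_turing A X n \<omega> - EH} \<le> exp (- L)"
    and "prob {\<omega>\<in>space M. S \<le> EH - good_turing A X n \<omega>} \<le> exp (- L)"
proof -
  let ?E = "\<lambda>u h. (\<Sum>i=1..n. of_bool (h i) :: nat) = 1"
  define r where "r u = real n * p u * (1 - p u) ^ (n - 1)" for u
  have r_eq: "r u = prob {\<omega>\<in>space M. ?E u (\<lambda>i\<in>{1..n}. X i u \<omega>)}" if "u \<in> A" for u
    using prob_hapax[OF that] by (simp add: r_def)
  have r_bounds: "0 \<le> r u" "r u \<le> real n * p u" if "u \<in> A" for u
    using p_range[OF that] by (auto simp: r_def mult_left_le power_le_one)
  have V: "0 < (\<Sum>u\<in>A. p u / real n)" and S: "sqrt (2 * (\<Sum>u\<in>A. p u / real n) * L) = S"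
    using lam n_pos by (simp_all add: S_def flip: sum_divide_distrib)
  have dev: "(\<Sum>u\<in>A. a / real n * (of_bool (?E u (\<lambda>i\<in>{1..n}. X i u \<omega>)) - r u))
             = a * (good_turing A X n \<omega> - EH)" for a \<omega>
    using n_pos by (simp add: good_turing_def hapax_def EH_def r_def sum_distrib_left sum_subtractf
        algebra_simps)
  have "prob {\<omega>\<in>space M. S + 1 / (3 * real n) * L
          \<le> (\<Sum>u\<in>A. 1 / real n * (of_bool (?E u (\<lambda>i\<in>{1..n}. X i u \<omega>)) - r u))} \<le> exp (- L)"
    unfolding S[symmetric]
  proof (rule history_indicator_sum_tail[OF r_eq _ L V])
    fix u s assume u: "u \<in> A" and s: "0 < s" "1 / (3 * real n) * s < 1"
    then show "centered_bernoulli_mgf (r u) (s * (1 / real n))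
                 \<le> exp (p u / real n * s\<^sup>2 / (2 * (1 - 1 / (3 * real n) * s)))"
      using centered_bernoulli_mgf_hapax_le[OF r_bounds[OF u] n_pos, of s] n_pos
      by (simp add: field_simps)
  qed (auto intro: divide_nonneg_nonneg)
  then show "prob {\<omega>\<in>space M. S + L / (3 * real n) \<le> good_turing A X n \<omega> - EH} \<le> exp (- L)"
    by (simp only: dev) simp
  have "prob {\<omega>\<in>space M. S + 0 * L
          \<le> (\<Sum>u\<in>A. - 1 / real n * (of_bool (?E u (\<lambda>i\<in>{1..n}. X i u \<omega>)) - r u))} \<le> exp (- L)"
    unfolding S[symmetric]
  proof (rule history_indicator_sum_tail[OF r_eq _ L V])
    fix u s assume u: "u \<in> A" and s: "0 < s" "0 * s < (1::real)"
    then show "centered_bernoulli_mgf (r u) (s * (- 1 / real n))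
                 \<le> exp (p u / real n * s\<^sup>2 / (2 * (1 - 0 * s)))"
      using centered_bernoulli_mgf_neg_hapax_le[OF r_bounds[OF u] n_pos, of s] by simp
  qed auto
  then show "prob {\<omega>\<in>space M. S \<le> EH - good_turing A X n \<omega>} \<le> exp (- L)"
    by (simp only: dev) simp
qed

text \<open>Each summand of the bias is at most \<open>p / n\<close> because \<open>n p (1 - p)\<^sup>n\<^sup>-\<^sup>1\<close> is the
  probability of a hapax.\<close>
lemma expected_remaining_minus_good_turing:
  defines "d \<equiv> (\<Sum>u\<in>A. p u * (1 - p u) ^ n) - (\<Sum>u\<in>A. p u * (1 - p u) ^ (n - 1))"
  shows "- (\<Sum>u\<in>A. p u) / real n \<le> d" and "d \<le> 0"
proof -
  have summand: "- (p u / real n) \<le> p u * (1 - p u) ^ n - p u * (1 - p u) ^ (n - 1)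
                 \<and> p u * (1 - p u) ^ n - p u * (1 - p u) ^ (n - 1) \<le> 0" if u: "u \<in> A" for u
  proof -
    have p: "0 \<le> p u" "p u \<le> 1" using p_range[OF u] by auto
    have "p u * (1 - p u) ^ n - p u * (1 - p u) ^ (n - 1) = - (p u * (p u * (1 - p u) ^ (n - 1)))"
      using n_pos by (cases n) (simp_all add: algebra_simps)
    moreover have "p u * (1 - p u) ^ (n - 1) \<le> 1 / real n"
      using prob_hapax[OF u, symmetric] n_pos by (simp add: field_simps)
    then have "p u * (p u * (1 - p u) ^ (n - 1)) \<le> p u / real n"
      using mult_left_mono[OF _ p(1)] by fastforce
    ultimately show ?thesis using p by simp
  qed
  have d: "d = (\<Sum>u\<in>A. p u * (1 - p u) ^ n - p u * (1 - p u) ^ (n - 1))"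
    by (simp add: d_def sum_subtractf)
  have "- (\<Sum>u\<in>A. p u) / real n = (\<Sum>u\<in>A. - (p u / real n))"
    by (simp add: sum_negf sum_divide_distrib)
  also have "\<dots> \<le> d"
    unfolding d using summand by (intro sum_mono) auto
  finally show "- (\<Sum>u\<in>A. p u) / real n \<le> d" .
  show "d \<le> 0"
    unfolding d using summand by (intro sum_nonpos) auto
qed

lemma measurable_remaining: "remaining A p X n \<in> borel_measurable M"
proof -
  have "(\<lambda>\<omega>. unseen X n u \<omega> * p u) \<in> borel_measurable M" if "u \<in> A" for u
    using measurable_history_fun[OF that, of borel "\<lambda>h. of_bool (\<forall>i\<in>{1..n}. \<not> h i) * p u"]
    by (simp add: unseen_def)
  then show ?thesis unfolding remaining_def[abs_def] by (rule borel_measurable_sum)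
qed

lemma measurable_good_turing: "good_turing A X n \<in> borel_measurable M"
proof -
  have "hapax X n u \<in> borel_measurable M" if "u \<in> A" for u
    using measurable_history_fun[OF that, of borel "\<lambda>h. of_bool ((\<Sum>i=1..n. of_bool (h i) :: nat) = 1)"]
    by (simp add: hapax_def[abs_def])
  then show ?thesis unfolding good_turing_def[abs_def] by measurable
qed

lemma AE_remaining_good_turing_zero:
  assumes "(\<Sum>u\<in>A. p u) = 0"
  shows "AE \<omega> in M. remaining A p X n \<omega> = 0 \<and> good_turing A X n \<omega> = 0"
proof -
  have p0: "p u = 0" if "u \<in> A" for u
    using assms p_range finite_nodes that by (simp add: sum_nonneg_eq_0_iff)
  have "AE \<omega> in M. \<forall>i\<in>{1..n}. \<not> X i u \<omega>" if u: "u \<in> A" for u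
  proof -
    have "{\<omega>\<in>space M. \<forall>i\<in>{1..n}. \<not> X i u \<omega>} \<in> events"
      using measurable_history_fun[OF u, of "count_space UNIV" "\<lambda>h. \<forall>i\<in>{1..n}. \<not> h i"]
      by (auto intro!: predE simp: pred_def)
    then show ?thesis
      using prob_eq_1 prob_unseen[OF u] p0[OF u] by (auto elim: AE_mp)
  qed
  then have "AE \<omega> in M. \<forall>u\<in>A. \<forall>i\<in>{1..n}. \<not> X i u \<omega>"
    by (rule AE_finite_allI[OF finite_nodes])
  then show ?thesis
    by (rule AE_mp) (simp add: remaining_def good_turing_def hapax_def p0)
qed


lemma remaining_minus_good_turing_deviation:
  assumes L: "0 < L"
  defines "lam \<equiv> \<Sum>u\<in>A. p u"
  defines "\<beta> \<equiv> (1 + sqrt 2) * sqrt (lam * L / real n) + L / (3 * real n)"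
  shows "1 - 4 * exp (- L) \<le> prob {\<omega>\<in>space M. - \<beta> - lam / real n \<le> remaining A p X n \<omega> - good_turing A X n \<omega>
                                   \<and> remaining A p X n \<omega> - good_turing A X n \<omega> \<le> \<beta>}"
    (is "_ \<le> prob ?good")
proof -
  have [measurable]: "remaining A p X n \<in> borel_measurable M" "good_turing A X n \<in> borel_measurable M"
    by (rule measurable_remaining measurable_good_turing)+
  have good: "?good \<in> events" by measurable
  have \<beta>: "0 < \<beta>" using L n_pos p_range by (simp add: \<beta>_def lam_def sum_nonneg add_nonneg_pos)
  show ?thesis
  proof (cases "lam = 0")
    case True
    have "AE \<omega> in M. \<omega> \<in> ?good"
      using AE_remaining_good_turing_zero True \<beta> by (auto simp: lam_def elim!: AE_mp)
    then have "prob ?good = 1" using good by (simp add: prob_eq_1)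
    then show ?thesis by simp
  next
    case False
    then have lam: "0 < lam" using p_range by (simp add: lam_def sum_nonneg order_less_le)
    define S where "S = sqrt (lam * L / real n)"
    define ER where "ER = (\<Sum>u\<in>A. p u * (1 - p u) ^ n)"
    define EH where "EH = (\<Sum>u\<in>A. p u * (1 - p u) ^ (n - 1))"
    have S2: "sqrt (2 * lam * L / real n) = sqrt 2 * S"
      by (simp add: S_def real_sqrt_mult[symmetric] mult.assoc)
    define E1 where "E1 = {\<omega>\<in>space M. S + L / (3 * real n) \<le> remaining A p X n \<omega> - ER}"
    define E2 where "E2 = {\<omega>\<in>space M. S \<le> ER - remaining A p X n \<omega>}"
    define E3 where "E3 = {\<omega>\<in>space M. sqrt 2 * S + L / (3 * real n) \<le> good_turing A X n \<omega> - EH}"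
    define E4 where "E4 = {\<omega>\<in>space M. sqrt 2 * S \<le> EH - good_turing A X n \<omega>}"
    have events: "E1 \<in> events" "E2 \<in> events" "E3 \<in> events" "E4 \<in> events"
      unfolding E1_def E2_def E3_def E4_def by measurable
    have "prob E1 \<le> exp (- L)" "prob E2 \<le> exp (- L)"
      using remaining_tails[OF L] lam by (simp_all add: E1_def E2_def S_def ER_def lam_def)
    moreover have "prob E3 \<le> exp (- L)" "prob E4 \<le> exp (- L)"
      using good_turing_tails[OF L] lam S2 by (simp_all add: E3_def E4_def EH_def lam_def)
    moreover have "prob (E1 \<union> E2 \<union> E3 \<union> E4) \<le> prob E1 + prob E2 + prob E3 + prob E4"
      using events measure_Un_le[of E1 M E2] measure_Un_le[of "E1 \<union> E2" M E3]
        measure_Un_le[of "E1 \<union> E2 \<union> E3" M E4]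
      by auto
    ultimately have union: "prob (E1 \<union> E2 \<union> E3 \<union> E4) \<le> 4 * exp (- L)" by linarith
    have bias: "- lam / real n \<le> ER - EH" "ER - EH \<le> 0"
      using expected_remaining_minus_good_turing by (simp_all add: ER_def EH_def lam_def)
    have \<beta>_S: "\<beta> = (1 + sqrt 2) * S + L / (3 * real n)" by (simp add: \<beta>_def S_def)
    have "space M - (E1 \<union> E2 \<union> E3 \<union> E4) \<subseteq> ?good"
    proof
      fix \<omega> assume \<omega>: "\<omega> \<in> space M - (E1 \<union> E2 \<union> E3 \<union> E4)"
      then have "remaining A p X n \<omega> - ER < S + L / (3 * real n)" "ER - remaining A p X n \<omega> < S"
        "good_turing A X n \<omega> - EH < sqrt 2 * S + L / (3 * real n)" "EH - good_turing A X n \<omega> < sqrt 2 * S"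
        by (auto simp: E1_def E2_def E3_def E4_def)
      moreover have "(1 + sqrt 2) * S = S + sqrt 2 * S" by (simp add: distrib_right)
      ultimately show "\<omega> \<in> ?good" using \<omega> bias unfolding \<beta>_S by auto
    qed
    then have "prob (space M - (E1 \<union> E2 \<union> E3 \<union> E4)) \<le> prob ?good"
      by (rule finite_measure_mono[OF _ good])
    then show ?thesis
      using union events by (simp add: prob_compl)
  qed
qed

end

theorem theorem1:
  fixes M :: "'w measure" and A :: "'a set" and p :: "'a \<Rightarrow> real"
    and X :: "nat \<Rightarrow> 'a \<Rightarrow> 'w \<Rightarrow> bool" and n :: nat and \<delta> :: real
  assumes "prob_space M"
    and "finite A"
    and "\<And>u. u \<in> A \<Longrightarrow> 0 \<le> p u \<and> p u \<le> 1"
    and "prob_space.indep_vars M (\<lambda>_. count_space UNIV) (\<lambda>(i, u). X i u) ({1..} \<times> A)"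
    and "\<And>i u. i \<ge> 1 \<Longrightarrow> u \<in> A \<Longrightarrow>
           distr M (count_space UNIV) (X i u) = measure_pmf (bernoulli_pmf (p u))"
    and "n \<ge> 1"
    and "0 < \<delta>" and "\<delta> < 1"
  shows "measure M {\<omega> \<in> space M.
            - beta_n (\<Sum>u\<in>A. p u) \<delta> n - (\<Sum>u\<in>A. p u) / real n
              \<le> remaining A p X n \<omega> - good_turing A X n \<omega>
            \<and> remaining A p X n \<omega> - good_turing A X n \<omega> \<le> beta_n (\<Sum>u\<in>A. p u) \<delta> n}
         \<ge> 1 - \<delta>"
proof -
  interpret activation_model M A p X n
    using assms(1-6) by (intro activation_model.intro activation_model_axioms.intro)
  have "0 < ln (4 / \<delta>)" and "exp (- ln (4 / \<delta>)) = \<delta> / 4"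
    using assms(7,8) by (simp_all add: exp_minus)
  then show ?thesis
    using remaining_minus_good_turing_deviation[of "ln (4 / \<delta>)"] by (simp add: beta_n_def)
qed

end
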